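(* Let $0<r_i<r_o$, $0<h<H$, $n>0$, $p>0$, and set $\Omega^-=[r_i,r_o]\times[0,h]$ in the $(r,z)$-plane. Let $\boldsymbol\sigma^0$ be the axisymmetric stress field $$\sigma^0_r=a+a_r r^{-2/n},\quad \sigma^0_\theta=a+a_\theta r^{-2/n},\quad \sigma^0_z=a+a_z r^{-2/n},\quad \sigma^0_{rz}=0,$$ with $$a=p\,\frac{r_i^{2/n}}{r_o^{2/n}-r_i^{2/n}},\quad a_r=-p\,\frac{r_i^{2/n}r_o^{2/n}}{r_o^{2/n}-r_i^{2/n}},\quad a_\theta=\frac{n-2}{n}a_r,\quad a_z=\frac{n-1}{n}a_r,$$ and put $c=3^{\frac{n-1}{2}}\,a_r|a_r|^{n-1}\,n^{-n}$. Then for every admissible virtual stress field $\delta\boldsymbol\sigma$ (defined in the context) $$\int_{\Omega^-}\dot{\boldsymbol\varepsilon}(\boldsymbol\sigma^0):\delta\boldsymbol\sigma\;r\,dr\,dz=-\int_{r_i}^{r_o}\frac{c}{r}\,\delta\sigma_{rz}(r,h)\,r\,dr .$$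
   Context: Axisymmetric stress fields in a pipe are described in cylindrical coordinates by components $\sigma_r,\sigma_\theta,\sigma_z,\sigma_{rz}$ depending on $(r,z)\in[r_i,r_o]\times[0,H]$ (all other shear components vanish). An admissible virtual stress field $\delta\boldsymbol\sigma$ is a continuously differentiable such field on $[r_i,r_o]\times[0,H]$ satisfying the axisymmetric equilibrium equations $$\frac{\partial \sigma_r}{\partial r}+\frac{1}{r}(\sigma_r-\sigma_\theta)+\frac{\partial\sigma_{rz}}{\partial z}=0,\qquad \frac{\partial\sigma_{rz}}{\partial r}+\frac{1}{r}\sigma_{rz}+\frac{\partial\sigma_z}{\partial z}=0,$$ and the homogeneous boundary conditions $\sigma_r=\sigma_{rz}=0$ at $r=r_i$ and $r=r_o$, and $\sigma_{rz}=0$ at $z=0$ and $z=H$. Norton's creep law (with unit coefficient): $\dot{\boldsymbol\varepsilon}(\boldsymbol\sigma)=\boldsymbol s\,(\sigma_{vM})^{n-1}$, where $\boldsymbol s=\boldsymbol\sigma-\frac13\mathrm{tr}(\boldsymbol\sigma)\boldsymbol I$ is the stress deviator and $\sigma_{vM}=\sqrt{\tfrac32\boldsymbol s:\boldsymbol s}$. For axisymmetric tensors, $\boldsymbol\varepsilon:\boldsymbol\sigma=\varepsilon_r\sigma_r+\varepsilon_\theta\sigma_\theta+\varepsilon_z\sigma_z+2\varepsilon_{rz}\sigma_{rz}$. *)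

theory Defs
  imports "HOL-Analysis.Analysis"
begin

definition C1_on :: "(real \<times> real) set \<Rightarrow> (real \<times> real \<Rightarrow> real)
    \<Rightarrow> (real \<times> real \<Rightarrow> real) \<Rightarrow> (real \<times> real \<Rightarrow> real) \<Rightarrow> bool" where
  "C1_on S f fr fz \<longleftrightarrow>
     (\<forall>x\<in>S. (f has_derivative (\<lambda>(u,v). fr x * u + fz x * v)) (at x within S))
     \<and> continuous_on S fr \<and> continuous_on S fz"

definition admissible ::
  "real \<Rightarrow> real \<Rightarrow> real \<Rightarrow> (real \<times> real \<Rightarrow> real) \<Rightarrow> (real \<times> real \<Rightarrow> real)
     \<Rightarrow> (real \<times> real \<Rightarrow> real) \<Rightarrow> (real \<times> real \<Rightarrow> real) \<Rightarrow> bool" where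
  "admissible ri ro H sr st sz srz \<longleftrightarrow>
     (let S = cbox (ri, 0) (ro, H) in
      (\<exists>sr_r sr_z st_r st_z sz_r sz_z srz_r srz_z.
         C1_on S sr sr_r sr_z \<and> C1_on S st st_r st_z \<and>
         C1_on S sz sz_r sz_z \<and> C1_on S srz srz_r srz_z \<and>
         (\<forall>r z. (r, z) \<in> S \<longrightarrow>
             sr_r (r, z) + (sr (r, z) - st (r, z)) / r + srz_z (r, z) = 0 \<and>
             srz_r (r, z) + srz (r, z) / r + sz_z (r, z) = 0)) \<and>
      (\<forall>z\<in>{0..H}. sr (ri, z) = 0 \<and> srz (ri, z) = 0 \<and> sr (ro, z) = 0 \<and> srz (ro, z) = 0) \<and>
      (\<forall>r\<in>{ri..ro}. srz (r, 0) = 0 \<and> srz (r, H) = 0))"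

text \<open>Von Mises stress of an axisymmetric stress (sigma_r, sigma_theta, sigma_z, sigma_rz);
  s:s = s_r^2 + s_theta^2 + s_z^2 + 2 s_rz^2.\<close>
definition von_mises :: "real \<times> real \<times> real \<times> real \<Rightarrow> real" where
  "von_mises \<sigma> = (case \<sigma> of (sr, st, sz, srz) \<Rightarrow>
     (let m = (sr + st + sz) / 3 in
      sqrt (3/2 * ((sr - m)^2 + (st - m)^2 + (sz - m)^2 + 2 * srz^2))))"

text \<open>Norton creep law with unit coefficient: strain rate = s * (sigma_vM)^(n-1),
  returned as (eps_r, eps_theta, eps_z, eps_rz).\<close>
definition norton :: "real \<Rightarrow> real \<times> real \<times> real \<times> real \<Rightarrow> real \<times> real \<times> real \<times> real" where
  "norton n \<sigma> = (case \<sigma> of (sr, st, sz, srz) \<Rightarrow>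
     (let m = (sr + st + sz) / 3; k = von_mises \<sigma> powr (n - 1) in
      ((sr - m) * k, (st - m) * k, (sz - m) * k, srz * k)))"

definition contr :: "real \<times> real \<times> real \<times> real \<Rightarrow> real \<times> real \<times> real \<times> real \<Rightarrow> real" where
  "contr e \<sigma> = (case e of (er, et, ez, erz) \<Rightarrow> case \<sigma> of (sr, st, sz, srz) \<Rightarrow>
     er * sr + et * st + ez * sz + 2 * erz * srz)"

end

theory Submission
  imports Defs
begin

text \<open>The deviator of \<open>\<sigma>\<^sup>0\<close> is the pure shear \<open>(s, -s, 0, 0)\<close> with \<open>s = a_r r^(-2/n) / n\<close>,
  whatever \<open>a\<close> is, so \<open>\<epsilon>(\<sigma>\<^sup>0) : \<delta>\<sigma> r = c (\<delta>\<sigma>_r - \<delta>\<sigma>_\<theta>) / r\<close>, the powers of \<open>r\<close>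
  cancelling exactly. The radial equilibrium equation rewrites \<open>(\<delta>\<sigma>_r - \<delta>\<sigma>_\<theta>) / r\<close> as
  \<open>- \<partial>\<delta>\<sigma>_r/\<partial>r - \<partial>\<delta>\<sigma>_rz/\<partial>z\<close>. Integrated over \<open>\<Omega>\<^sup>-\<close>, the first term vanishes since \<open>\<delta>\<sigma>_r = 0\<close> on the
  walls \<open>r = r_i, r_o\<close>, and the second leaves \<open>\<delta>\<sigma>_rz\<close> on the cut \<open>z = h\<close>, since \<open>\<delta>\<sigma>_rz = 0\<close> at \<open>z = 0\<close>.\<close>

lemma von_mises_pure_shear: "von_mises (m + s, m - s, m, 0) = sqrt 3 * \<bar>s\<bar>"
proof -
  have "(m + s + (m - s) + m) / 3 = m" by simp
  then have "von_mises (m + s, m - s, m, 0) = sqrt (3 * s\<^sup>2)"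
    unfolding von_mises_def Let_def prod.case by simp
  then show ?thesis by (simp add: real_sqrt_mult)
qed

lemma norton_pure_shear:
  "norton n (m + s, m - s, m, 0) =
     (s * (sqrt 3 * \<bar>s\<bar>) powr (n - 1), - s * (sqrt 3 * \<bar>s\<bar>) powr (n - 1), 0, 0)"
proof -
  have "(m + s + (m - s) + m) / 3 = m" by simp
  then show ?thesis
    unfolding norton_def Let_def prod.case von_mises_pure_shear by simp
qed

lemma contr_norton_pure_shear:
  "contr (norton n (m + s, m - s, m, 0)) (x, y, z, w) = s * (sqrt 3 * \<bar>s\<bar>) powr (n - 1) * (x - y)"
  unfolding norton_pure_shear contr_def by (simp add: algebra_simps)

lemma contr_norton_power_profile:
  fixes a arr n r :: real
  assumes n: "0 < n" and r: "0 < r"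
  shows "contr (norton n (a + arr * r powr (-2/n), a + (n-2)/n * arr * r powr (-2/n),
            a + (n-1)/n * arr * r powr (-2/n), 0)) (x, y, z, w) * r
       = 3 powr ((n-1)/2) * arr * \<bar>arr\<bar> powr (n-1) * n powr (-n) * (x - y) / r"
proof -
  define t where "t = r powr (-2/n)"
  define m where "m = a + (n-1)/n * arr * t"
  define s where "s = arr / n * t"
  have t: "0 < t" using r by (simp add: t_def)
  have "(a + arr * t, a + (n-2)/n * arr * t, a + (n-1)/n * arr * t, 0::real) = (m + s, m - s, m, 0)"
    using n by (simp add: m_def s_def field_simps)
  then have "contr (norton n (a + arr * t, a + (n-2)/n * arr * t, a + (n-1)/n * arr * t, 0)) (x, y, z, w) * r
      = s * (sqrt 3 * \<bar>s\<bar>) powr (n - 1) * (x - y) * r"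
    by (simp add: contr_norton_pure_shear)
  also have "(sqrt 3 * \<bar>s\<bar>) powr (n - 1) = 3 powr ((n-1)/2) * \<bar>arr\<bar> powr (n-1) * t powr (n-1) / n powr (n-1)"
    using t n by (simp add: s_def abs_mult powr_mult powr_divide sqrt_def root_powr_inverse powr_powr)
  also have "s * (3 powr ((n-1)/2) * \<bar>arr\<bar> powr (n-1) * t powr (n-1) / n powr (n-1)) * (x - y) * r
      = 3 powr ((n-1)/2) * arr * \<bar>arr\<bar> powr (n-1) * (1 / (n * n powr (n-1))) * (t * t powr (n-1) * r) * (x - y)"
    by (simp only: s_def) (simp add: algebra_simps)
  also have "1 / (n * n powr (n-1)) = n powr (-n)"
    using n by (simp add: powr_mult_base powr_minus divide_inverse)
  also have "t * t powr (n-1) * r = 1 / r"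
  proof -
    have "t * t powr (n-1) = t powr n"
      using t by (simp add: powr_mult_base)
    also have "\<dots> = r powr (-2)"
      using n by (simp add: t_def powr_powr)
    finally have "t * t powr (n-1) = r powr (-2)" .
    then show ?thesis using r by (simp add: powr_minus powr_realpow power2_eq_square divide_simps)
  qed
  finally show ?thesis by (simp add: t_def)
qed

lemma C1_on_has_vector_derivative_fst:
  assumes "C1_on S f fr fz" and "(\<lambda>r. (r, z)) ` {a..b} \<subseteq> S" and "r \<in> {a..b}"
  shows "((\<lambda>r. f (r, z)) has_vector_derivative fr (r, z)) (at r within {a..b})"
proof -
  have "((\<lambda>r. (r, z)) has_derivative (\<lambda>u. (u, 0))) (at r within {a..b})"
    by (auto intro!: derivative_eq_intros)
  moreover have "\<And>x. x \<in> S \<Longrightarrow> (f has_derivative (\<lambda>(u, v). fr x * u + fz x * v)) (at x within S)"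
    using assms(1) by (simp add: C1_on_def)
  ultimately show ?thesis
    using has_derivative_in_compose2[OF _ assms(2,3)] by (fastforce simp: has_vector_derivative_def mult.commute)
qed

lemma C1_on_has_vector_derivative_snd:
  assumes "C1_on S f fr fz" and "(\<lambda>z. (r, z)) ` {c..d} \<subseteq> S" and "z \<in> {c..d}"
  shows "((\<lambda>z. f (r, z)) has_vector_derivative fz (r, z)) (at z within {c..d})"
proof -
  have "((\<lambda>z. (r, z)) has_derivative (\<lambda>v. (0, v))) (at z within {c..d})"
    by (auto intro!: derivative_eq_intros)
  moreover have "\<And>x. x \<in> S \<Longrightarrow> (f has_derivative (\<lambda>(u, v). fr x * u + fz x * v)) (at x within S)"
    using assms(1) by (simp add: C1_on_def)
  ultimately show ?thesis
    using has_derivative_in_compose2[OF _ assms(2,3)] by (fastforce simp: has_vector_derivative_def mult.commute)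
qed

lemma C1_on_integral_partial_fst:
  assumes f: "C1_on S f fr fz" and box: "cbox (a, c) (b, d) \<subseteq> S" and "a \<le> b"
  shows "integral (cbox (a, c) (b, d)) fr = integral {c..d} (\<lambda>z. f (b, z) - f (a, z))"
proof -
  have cont: "continuous_on (cbox (a, c) (b, d)) fr"
    using f box by (auto simp: C1_on_def intro: continuous_on_subset)
  have "integral (cbox (a, c) (b, d)) fr = integral (cbox a b) (\<lambda>r. integral (cbox c d) (\<lambda>z. fr (r, z)))"
    using cont by (rule integral_prod_continuous)
  also have "\<dots> = integral (cbox c d) (\<lambda>z. integral (cbox a b) (\<lambda>r. fr (r, z)))"
    using cont by (intro integral_swap_continuous) simp
  also have "\<dots> = integral {c..d} (\<lambda>z. f (b, z) - f (a, z))"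
    unfolding cbox_interval
  proof (rule integral_cong)
    fix z assume "z \<in> {c..d}"
    then have "(\<lambda>r. (r, z)) ` {a..b} \<subseteq> S" using box by (auto simp: cbox_Pair_iff)
    then have "((\<lambda>r. fr (r, z)) has_integral f (b, z) - f (a, z)) {a..b}"
      using C1_on_has_vector_derivative_fst[OF f] \<open>a \<le> b\<close> by (intro fundamental_theorem_of_calculus)
    then show "integral {a..b} (\<lambda>r. fr (r, z)) = f (b, z) - f (a, z)" by (rule integral_unique)
  qed
  finally show ?thesis .
qed

lemma C1_on_integral_partial_snd:
  assumes f: "C1_on S f fr fz" and box: "cbox (a, c) (b, d) \<subseteq> S" and "c \<le> d"
  shows "integral (cbox (a, c) (b, d)) fz = integral {a..b} (\<lambda>r. f (r, d) - f (r, c))"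
proof -
  have cont: "continuous_on (cbox (a, c) (b, d)) fz"
    using f box by (auto simp: C1_on_def intro: continuous_on_subset)
  have "integral (cbox (a, c) (b, d)) fz = integral (cbox a b) (\<lambda>r. integral (cbox c d) (\<lambda>z. fz (r, z)))"
    using cont by (rule integral_prod_continuous)
  also have "\<dots> = integral {a..b} (\<lambda>r. f (r, d) - f (r, c))"
    unfolding cbox_interval
  proof (rule integral_cong)
    fix r assume "r \<in> {a..b}"
    then have "(\<lambda>z. (r, z)) ` {c..d} \<subseteq> S" using box by (auto simp: cbox_Pair_iff)
    then have "((\<lambda>z. fz (r, z)) has_integral f (r, d) - f (r, c)) {c..d}"
      using C1_on_has_vector_derivative_snd[OF f] \<open>c \<le> d\<close> by (intro fundamental_theorem_of_calculus)
    then show "integral {c..d} (\<lambda>z. fz (r, z)) = f (r, d) - f (r, c)" by (rule integral_unique)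
  qed
  finally show ?thesis .
qed

lemma admissible_integral_hoop_difference:
  assumes adm: "admissible ri ro H sr st sz srz" and "ri \<le> ro" and "0 \<le> h" and "h \<le> H"
  shows "integral (cbox (ri, 0) (ro, h)) (\<lambda>(r, z). (sr (r, z) - st (r, z)) / r)
       = - integral {ri..ro} (\<lambda>r. srz (r, h))"
proof -
  define \<Omega> where "\<Omega> = cbox (ri, 0::real) (ro, h)"
  have \<Omega>_sub: "\<Omega> \<subseteq> cbox (ri, 0) (ro, H)"
    using \<open>h \<le> H\<close> by (auto simp: \<Omega>_def cbox_Pair_iff)
  obtain sr_r sr_z st_r st_z sz_r sz_z srz_r srz_z where
    sr: "C1_on (cbox (ri, 0) (ro, H)) sr sr_r sr_z" and
    srz: "C1_on (cbox (ri, 0) (ro, H)) srz srz_r srz_z" and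
    equilibrium: "\<And>r z. (r, z) \<in> cbox (ri, 0) (ro, H) \<Longrightarrow>
       sr_r (r, z) + (sr (r, z) - st (r, z)) / r + srz_z (r, z) = 0"
    using adm unfolding admissible_def Let_def by blast
  have sr_lateral: "\<And>z. z \<in> {0..h} \<Longrightarrow> sr (ri, z) = 0 \<and> sr (ro, z) = 0"
    and srz_bottom: "\<And>r. r \<in> {ri..ro} \<Longrightarrow> srz (r, 0) = 0"
    using adm \<open>h \<le> H\<close> unfolding admissible_def Let_def by auto
  have "continuous_on \<Omega> sr_r" "continuous_on \<Omega> srz_z"
    using sr srz \<Omega>_sub by (meson C1_on_def continuous_on_subset)+
  then have integrable: "sr_r integrable_on \<Omega>" "srz_z integrable_on \<Omega>"
    unfolding \<Omega>_def by (simp_all add: integrable_continuous)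
  have "integral \<Omega> (\<lambda>(r, z). (sr (r, z) - st (r, z)) / r) = integral \<Omega> (\<lambda>x. - (sr_r x + srz_z x))"
  proof (rule integral_cong)
    fix x assume "x \<in> \<Omega>"
    moreover obtain r z where "x = (r, z)" by fastforce
    ultimately show "(\<lambda>(r, z). (sr (r, z) - st (r, z)) / r) x = - (sr_r x + srz_z x)"
      using equilibrium[of r z] \<Omega>_sub by auto
  qed
  also have "\<dots> = - (integral \<Omega> sr_r + integral \<Omega> srz_z)"
    by (simp only: integral_neg integral_add[OF integrable])
  also have "integral \<Omega> sr_r = integral {0..h} (\<lambda>z. sr (ro, z) - sr (ri, z))"
    unfolding \<Omega>_def using sr \<Omega>_sub \<open>ri \<le> ro\<close> by (intro C1_on_integral_partial_fst) (auto simp: \<Omega>_def)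
  also have "\<dots> = integral {0..h} (\<lambda>z. 0)"
    using sr_lateral by (intro integral_cong) simp
  also have "\<dots> = 0" by simp
  also have "integral \<Omega> srz_z = integral {ri..ro} (\<lambda>r. srz (r, h) - srz (r, 0))"
    unfolding \<Omega>_def using srz \<Omega>_sub \<open>0 \<le> h\<close> by (intro C1_on_integral_partial_snd) (auto simp: \<Omega>_def)
  also have "\<dots> = integral {ri..ro} (\<lambda>r. srz (r, h))"
    using srz_bottom by (intro integral_cong) simp
  finally show ?thesis by (simp add: \<Omega>_def)
qed

lemma integral_contr_norton_power_profile:
  fixes a arr n :: real
  assumes adm: "admissible ri ro H dsr dst dsz dsrz"
    and "0 < ri" "ri \<le> ro" "0 \<le> h" "h \<le> H" "0 < n"
  shows "integral (cbox (ri, 0) (ro, h))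
      (\<lambda>(r, z). contr (norton n (a + arr * r powr (-2/n), a + (n-2)/n * arr * r powr (-2/n),
         a + (n-1)/n * arr * r powr (-2/n), 0)) (dsr (r, z), dst (r, z), dsz (r, z), dsrz (r, z)) * r)
    = - (3 powr ((n-1)/2) * arr * \<bar>arr\<bar> powr (n-1) * n powr (-n) * integral {ri..ro} (\<lambda>r. dsrz (r, h)))"
    (is "integral ?\<Omega> ?f = - (?c * _)")
proof -
  have "integral ?\<Omega> ?f = integral ?\<Omega> (\<lambda>x. ?c * (\<lambda>(r, z). (dsr (r, z) - dst (r, z)) / r) x)"
  proof (rule integral_cong)
    fix x assume "x \<in> ?\<Omega>"
    then obtain r z where x: "x = (r, z)" and "0 < r"
      using \<open>0 < ri\<close> by (cases x) (auto simp: cbox_Pair_iff)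
    have "?f (r, z) = ?c * (dsr (r, z) - dst (r, z)) / r"
      unfolding prod.case by (rule contr_norton_power_profile[OF \<open>0 < n\<close> \<open>0 < r\<close>])
    then show "?f x = ?c * (\<lambda>(r, z). (dsr (r, z) - dst (r, z)) / r) x"
      by (simp only: x prod.case times_divide_eq_right)
  qed
  also have "\<dots> = - (?c * integral {ri..ro} (\<lambda>r. dsrz (r, h)))"
    using admissible_integral_hoop_difference[OF adm] assms by simp
  finally show ?thesis .
qed

theorem mainTheorem1:
  fixes ri ro h H n p :: real
    and dsr dst dsz dsrz :: "real \<times> real \<Rightarrow> real"
  assumes "0 < ri" "ri < ro" "0 < h" "h < H" "0 < n" "0 < p"
    and "admissible ri ro H dsr dst dsz dsrz"
  shows
    "(let a = p * ri powr (2/n) / (ro powr (2/n) - ri powr (2/n));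
          arr = - p * ri powr (2/n) * ro powr (2/n) / (ro powr (2/n) - ri powr (2/n));
          ath = (n - 2) / n * arr;
          azz = (n - 1) / n * arr;
          c = 3 powr ((n - 1) / 2) * arr * \<bar>arr\<bar> powr (n - 1) * n powr (- n);
          \<sigma>0 = (\<lambda>r::real. (a + arr * r powr (-2/n), a + ath * r powr (-2/n),
                             a + azz * r powr (-2/n), 0::real))
      in integral (cbox (ri, 0) (ro, h))
           (\<lambda>(r, z). contr (norton n (\<sigma>0 r)) (dsr (r, z), dst (r, z), dsz (r, z), dsrz (r, z)) * r)
         = - integral {ri..ro} (\<lambda>r. c / r * dsrz (r, h) * r))"
proof -
  have weight_cancels: "integral {ri..ro} (\<lambda>r. c / r * dsrz (r, h) * r) = c * integral {ri..ro} (\<lambda>r. dsrz (r, h))"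
    for c :: real
  proof -
    have "integral {ri..ro} (\<lambda>r. c / r * dsrz (r, h) * r) = integral {ri..ro} (\<lambda>r. c * dsrz (r, h))"
      using \<open>0 < ri\<close> by (intro integral_cong) auto
    then show ?thesis by simp
  qed
  from assms have "ri \<le> ro" "0 \<le> h" "h \<le> H" by auto
  with assms show ?thesis
    unfolding Let_def weight_cancels by (intro integral_contr_norton_power_profile)
qed

end
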